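(* For integers $k\ge1$ define the differential operators in the variables $t_1,t_2,\dots$ $$L_k=\frac{\partial}{\partial t_k}-\sum_{n\ge1}n\,t_n\,\frac{\partial}{\partial t_{n+k}}.$$ Then (i) $[L_n,L_m]=(m-n)L_{m+n}$ for all $n,m\ge1$; and (ii) if $U$ solves $\sum_{n\ge1}n t_n U^n=1$ (with $U=\frac1{t_1}+\dots$) and $f_0$ is any function with $\partial f_0/\partial t_n=U^n$ for all $n\ge1$ (e.g. $f_0=\sum_{n\ge1}t_nU^n-\ln U$), then $L_kf_0=0$ for all $k\ge1$.
   Context: The operators act on (formal power series or smooth) functions of countably many variables $t_1,t_2,\dots$; each application involves only finitely many nonzero terms on functions depending on finitely many variables, or is understood formally. *)

theory Defs
  imports "HOL-Analysis.Analysis"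
begin

text \<open>Functions of the variables t_1, t_2, ... are modelled as maps
  (nat => real) => real; the point t assigns the value t n to the variable t_n
  (the coordinate t 0 is an unused extra coordinate).\<close>

definition partial :: "nat \<Rightarrow> ((nat \<Rightarrow> real) \<Rightarrow> real) \<Rightarrow> (nat \<Rightarrow> real) \<Rightarrow> real" where
  "partial n F = (\<lambda>t. deriv (\<lambda>s. F (t(n := s))) (t n))"

fun iter_partial :: "nat list \<Rightarrow> ((nat \<Rightarrow> real) \<Rightarrow> real) \<Rightarrow> (nat \<Rightarrow> real) \<Rightarrow> real" where
  "iter_partial [] F = F"
| "iter_partial (i # is) F = partial i (iter_partial is F)"

definition finitely_dependent :: "((nat \<Rightarrow> real) \<Rightarrow> real) \<Rightarrow> bool" where
  "finitely_dependent F \<longleftrightarrow> (\<exists>N. \<forall>t t'. (\<forall>i<N. t i = t' i) \<longrightarrow> F t = F t')"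

text \<open>Smooth function of finitely many variables: all iterated partial derivatives
  exist everywhere and are continuous (product topology on nat => real, which for a
  function of finitely many variables is the usual topology of R^N).\<close>
definition smooth_fd :: "((nat \<Rightarrow> real) \<Rightarrow> real) \<Rightarrow> bool" where
  "smooth_fd F \<longleftrightarrow> finitely_dependent F \<and>
     (\<forall>is. continuous_on UNIV (iter_partial is F) \<and>
        (\<forall>i t. (\<lambda>s. iter_partial is F (t(i := s))) differentiable (at (t i))))"

definition L :: "nat \<Rightarrow> ((nat \<Rightarrow> real) \<Rightarrow> real) \<Rightarrow> (nat \<Rightarrow> real) \<Rightarrow> real" where
  "L k F = (\<lambda>t. partial k F t -
      (\<Sum>n. real (Suc n) * t (Suc n) * partial (Suc n + k) F t))"

end

theory Submission
  imports Defs
begin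

(* The operators L_k are handled through their action on smooth functions that
   depend only on the first N coordinates.  For such F the infinite sum in L_k F
   is a finite sum (the partials in the variables t_j with j >= N vanish), and
   L_k F again depends on finitely many coordinates.
   Part (i): differentiating L_m F in t_j by the product rule gives
     d_j (L_m F) = d_j d_m F - j d_{j+m} F - sum_b (b+1) t_(b+1) d_j d_(b+1+m) F,
   so L_n L_m F - L_m L_n F becomes an expression in the first and second
   partials of F.  By symmetry of second partials (Clairaut's theorem, proved
   below from the mean value theorem) all second-order terms cancel, and the
   first-order terms collect to (m - n) L_(m+n) F.
   Part (ii) is a pointwise computation: d_(n+k) f0 = U^(n+k) = U^k U^n, so the
   sum in L_k f0 equals U^k times sum_n n t_n U^n = U^k, which cancels d_k f0. *)

section \<open>Symmetry of mixed partial derivatives in two real variables\<close>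

lemma mixed_difference_mvt:
  fixes g gx gxy :: "real \<Rightarrow> real \<Rightarrow> real"
  assumes gx: "\<And>x y. ((\<lambda>x. g x y) has_real_derivative gx x y) (at x)"
    and gxy: "\<And>x y. ((\<lambda>y. gx x y) has_real_derivative gxy x y) (at y)"
    and h: "h > 0"
  obtains \<xi> \<eta> where "a < \<xi>" "\<xi> < a + h" "b < \<eta>" "\<eta> < b + h"
    "g (a+h) (b+h) - g (a+h) b - g a (b+h) + g a b = h * h * gxy \<xi> \<eta>"
proof -
  have ah: "a < a + h" and bh: "b < b + h" using h by auto
  have diff_x: "\<And>x. a \<le> x \<Longrightarrow> x \<le> a + h \<Longrightarrow>
      ((\<lambda>x. g x (b+h) - g x b) has_real_derivative gx x (b+h) - gx x b) (at x)"
    by (intro DERIV_diff gx)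
  obtain \<xi> where \<xi>: "a < \<xi>" "\<xi> < a + h"
    "(g (a+h) (b+h) - g (a+h) b) - (g a (b+h) - g a b) = (a + h - a) * (gx \<xi> (b+h) - gx \<xi> b)"
    using MVT2[OF ah diff_x] by blast
  obtain \<eta> where \<eta>: "b < \<eta>" "\<eta> < b + h" "gx \<xi> (b+h) - gx \<xi> b = (b + h - b) * gxy \<xi> \<eta>"
    using MVT2[OF bh, of "gx \<xi>" "gxy \<xi>"] gxy by blast
  show ?thesis
    by (rule that[OF \<xi>(1,2) \<eta>(1,2)]) (use \<xi>(3) \<eta>(3) in \<open>simp add: algebra_simps\<close>)
qed

lemma clairaut:
  fixes g gx gy gxy gyx :: "real \<Rightarrow> real \<Rightarrow> real"
  assumes gx: "\<And>x y. ((\<lambda>x. g x y) has_real_derivative gx x y) (at x)"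
    and gy: "\<And>x y. ((\<lambda>y. g x y) has_real_derivative gy x y) (at y)"
    and gxy: "\<And>x y. ((\<lambda>y. gx x y) has_real_derivative gxy x y) (at y)"
    and gyx: "\<And>x y. ((\<lambda>x. gy x y) has_real_derivative gyx x y) (at x)"
    and c1: "continuous_on UNIV (\<lambda>p. gxy (fst p) (snd p))"
    and c2: "continuous_on UNIV (\<lambda>p. gyx (fst p) (snd p))"
  shows "gxy a b = gyx a b"
proof -
  have close: "\<bar>gxy a b - gyx a b\<bar> < e" if e: "e > 0" for e
  proof -
    obtain d1 where d1: "d1 > 0"
      "\<And>p. dist p (a,b) < d1 \<Longrightarrow> dist (gxy (fst p) (snd p)) (gxy a b) < e/2"
      using c1 e unfolding continuous_on_iff by (metis UNIV_I fst_conv snd_conv half_gt_zero)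
    obtain d2 where d2: "d2 > 0"
      "\<And>p. dist p (a,b) < d2 \<Longrightarrow> dist (gyx (fst p) (snd p)) (gyx a b) < e/2"
      using c2 e unfolding continuous_on_iff by (metis UNIV_I fst_conv snd_conv half_gt_zero)
    define h where "h = min d1 d2 / 2"
    have h: "h > 0" using d1 d2 by (simp add: h_def)
    have near: "dist (x, y) (a, b) < min d1 d2" if "a < x" "x < a + h" "b < y" "y < b + h" for x y
    proof -
      have "dist (x, y) (a, b) = sqrt ((x-a)^2 + (y-b)^2)"
        by (simp add: dist_Pair_Pair dist_real_def)
      also have "\<dots> \<le> \<bar>x-a\<bar> + \<bar>y-b\<bar>" by (rule sqrt_sum_squares_le_sum_abs)
      also have "\<dots> < min d1 d2" using that by (auto simp: h_def)
      finally show ?thesis .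
    qed
    obtain \<xi> \<eta> where \<xi>\<eta>: "a < \<xi>" "\<xi> < a + h" "b < \<eta>" "\<eta> < b + h"
      "g (a+h) (b+h) - g (a+h) b - g a (b+h) + g a b = h * h * gxy \<xi> \<eta>"
      using mixed_difference_mvt[OF gx gxy h] .
    obtain \<eta>' \<xi>' where \<xi>\<eta>': "b < \<eta>'" "\<eta>' < b + h" "a < \<xi>'" "\<xi>' < a + h"
      "g (a+h) (b+h) - g a (b+h) - g (a+h) b + g a b = h * h * gyx \<xi>' \<eta>'"
      using mixed_difference_mvt[of "\<lambda>y x. g x y" "\<lambda>y x. gy x y" "\<lambda>y x. gyx x y", OF gy gyx h] .
    have "h * h * gxy \<xi> \<eta> = h * h * gyx \<xi>' \<eta>'"
      using \<xi>\<eta>(5) \<xi>\<eta>'(5) by (simp add: algebra_simps)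
    then have same: "gxy \<xi> \<eta> = gyx \<xi>' \<eta>'" using h by simp
    have "dist (gxy \<xi> \<eta>) (gxy a b) < e/2"
      using d1(2)[of "(\<xi>, \<eta>)"] near[OF \<xi>\<eta>(1-4)] by simp
    moreover have "dist (gyx \<xi>' \<eta>') (gyx a b) < e/2"
      using d2(2)[of "(\<xi>', \<eta>')"] near[OF \<xi>\<eta>'(3,4,1,2)] by simp
    ultimately show ?thesis using same unfolding dist_real_def by arith
  qed
  show ?thesis using close[of "\<bar>gxy a b - gyx a b\<bar>"] by linarith
qed

lemma line_deriv:
  assumes "smooth_fd F"
  shows "((\<lambda>s. iter_partial is F (t(i := s))) has_real_derivative
           partial i (iter_partial is F) (t(i := x))) (at x)"
proof -
  have "(\<lambda>s. iter_partial is F ((t(i := x))(i := s))) differentiable (at ((t(i := x)) i))"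
    using assms unfolding smooth_fd_def by blast
  then have "(\<lambda>s. iter_partial is F (t(i := s))) differentiable (at x)" by simp
  then show ?thesis
    by (simp add: DERIV_deriv_iff_real_differentiable partial_def)
qed

text \<open>Smooth functions of finitely many variables have symmetric second partials:
  restrict F to the plane of the coordinates i and j and apply Clairaut.\<close>
lemma partial_sym:
  assumes sm: "smooth_fd F"
  shows "partial i (partial j F) t = partial j (partial i F) t"
proof (cases "i = j")
  case False
  have upd_i: "(t(i := x, j := y))(i := s) = t(i := s, j := y)" for x y s
    using False by (auto simp: fun_upd_def)
  have upd_j: "(t(i := x, j := y))(j := s) = t(i := x, j := s)" for x y s
    by (auto simp: fun_upd_def)
  define P where "P = (\<lambda>p::real \<times> real. t(i := fst p, j := snd p))"
  have "continuous_on UNIV (\<lambda>p. P p k)" for k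
    using False by (cases "k = j"; cases "k = i") (auto simp: P_def intro!: continuous_intros)
  then have "continuous_on UNIV P" by (rule continuous_on_coordinatewise_then_product)
  then have cont: "continuous_on UNIV (\<lambda>p. iter_partial is F (P p))" for "is"
    using sm unfolding smooth_fd_def by (metis continuous_on_compose2 subset_UNIV)
  have "partial j (partial i F) (t(i := t i, j := t j)) = partial i (partial j F) (t(i := t i, j := t j))"
  proof (rule clairaut[where g = "\<lambda>x y. F (t(i := x, j := y))"
        and gx = "\<lambda>x y. partial i F (t(i := x, j := y))"
        and gy = "\<lambda>x y. partial j F (t(i := x, j := y))"
        and gxy = "\<lambda>x y. partial j (partial i F) (t(i := x, j := y))"
        and gyx = "\<lambda>x y. partial i (partial j F) (t(i := x, j := y))"])
    fix x y
    show "((\<lambda>x. F (t(i := x, j := y))) has_real_derivative partial i F (t(i := x, j := y))) (at x)"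
      using line_deriv[OF sm, of "[]" "t(i := x, j := y)" i x] by (simp add: upd_i)
    show "((\<lambda>y. F (t(i := x, j := y))) has_real_derivative partial j F (t(i := x, j := y))) (at y)"
      using line_deriv[OF sm, of "[]" "t(i := x, j := y)" j y] by (simp add: upd_j)
    show "((\<lambda>y. partial i F (t(i := x, j := y))) has_real_derivative
            partial j (partial i F) (t(i := x, j := y))) (at y)"
      using line_deriv[OF sm, of "[i]" "t(i := x, j := y)" j y] by (simp add: upd_j)
    show "((\<lambda>x. partial j F (t(i := x, j := y))) has_real_derivative
            partial i (partial j F) (t(i := x, j := y))) (at x)"
      using line_deriv[OF sm, of "[j]" "t(i := x, j := y)" i x] by (simp add: upd_i)
  next
    show "continuous_on UNIV (\<lambda>p. partial j (partial i F) (t(i := fst p, j := snd p)))"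
      using cont[of "[j, i]"] by (simp add: P_def)
    show "continuous_on UNIV (\<lambda>p. partial i (partial j F) (t(i := fst p, j := snd p)))"
      using cont[of "[i, j]"] by (simp add: P_def)
  qed
  then show ?thesis by simp
qed simp

section \<open>Functions depending only on the first N coordinates\<close>

definition depends_below :: "nat \<Rightarrow> ((nat \<Rightarrow> real) \<Rightarrow> real) \<Rightarrow> bool" where
  "depends_below N F \<longleftrightarrow> (\<forall>t t'. (\<forall>i<N. t i = t' i) \<longrightarrow> F t = F t')"

lemma smooth_fd_depends_below:
  assumes "smooth_fd F" obtains N where "depends_below N F"
  using assms unfolding smooth_fd_def finitely_dependent_def depends_below_def by blast

lemma depends_below_mono: "depends_below N F \<Longrightarrow> N \<le> M \<Longrightarrow> depends_below M F"
  unfolding depends_below_def by auto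

lemma partial_vanishes:
  assumes "depends_below N F" "N \<le> j"
  shows "partial j F t = 0"
proof -
  have "(\<lambda>s. F (t(j := s))) = (\<lambda>s. F t)"
    using assms unfolding depends_below_def by (intro ext) (metis fun_upd_other leD)
  then show ?thesis by (simp add: partial_def)
qed

lemma depends_below_partial:
  assumes "depends_below N F" shows "depends_below N (partial j F)"
  unfolding depends_below_def
proof (intro allI impI)
  fix t t' :: "nat \<Rightarrow> real" assume agree: "\<forall>i<N. t i = t' i"
  show "partial j F t = partial j F t'"
  proof (cases "j < N")
    case True
    have "(\<lambda>s. F (t(j := s))) = (\<lambda>s. F (t'(j := s)))"
      using assms agree unfolding depends_below_def by (intro ext) auto
    then show ?thesis using agree True by (simp add: partial_def)
  qed (use partial_vanishes[OF assms] in simp)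
qed

lemma L_finite_sum:
  assumes "depends_below N F"
  shows "L k F t = partial k F t - (\<Sum>n<N. real (Suc n) * t (Suc n) * partial (Suc n + k) F t)"
proof -
  have "(\<Sum>n. real (Suc n) * t (Suc n) * partial (Suc n + k) F t)
      = (\<Sum>n<N. real (Suc n) * t (Suc n) * partial (Suc n + k) F t)"
    by (rule suminf_finite) (auto simp: partial_vanishes[OF assms])
  then show ?thesis by (simp add: L_def)
qed

text \<open>L_k raises the number of relevant coordinates by at most one (through the
  coefficients t_n, n <= N).\<close>
lemma depends_below_L:
  assumes F: "depends_below N F" shows "depends_below (Suc N) (L k F)"
  unfolding depends_below_def
proof (intro allI impI)
  fix t t' :: "nat \<Rightarrow> real" assume agree: "\<forall>i<Suc N. t i = t' i"
  have "partial j F t = partial j F t'" for j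
    using depends_below_mono[OF depends_below_partial[OF F], of "Suc N"] agree
    unfolding depends_below_def by simp
  moreover have "t (Suc n) = t' (Suc n)" if "n < N" for n using agree that by simp
  ultimately show "L k F t = L k F t'" by (simp add: L_finite_sum[OF F])
qed

lemma coord_deriv: "((\<lambda>s. (t(j := s)) k) has_real_derivative (if k = j then 1 else 0)) (at x)"
  by (cases "k = j") auto

text \<open>Product rule applied to the finite-sum form of L_m F; the derivative of the
  coefficient t_j produces the extra term j * d_(j+m) F.\<close>
lemma partial_L:
  assumes sm: "smooth_fd F" and F: "depends_below N F" and j: "j \<ge> 1"
  shows "partial j (L m F) t = partial j (partial m F) t - real j * partial (j + m) F t
           - (\<Sum>n<N. real (Suc n) * t (Suc n) * partial j (partial (Suc n + m) F) t)"
proof -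
  define \<delta> where "\<delta> n = (if Suc n = j then 1 else 0 :: real)" for n
  have summand: "((\<lambda>s. real (Suc n) * (t(j := s)) (Suc n) * partial (Suc n + m) F (t(j := s)))
      has_real_derivative real (Suc n) * (\<delta> n * partial (Suc n + m) F t
        + t (Suc n) * partial j (partial (Suc n + m) F) t)) (at (t j))" for n
  proof -
    have "((\<lambda>s. partial (Suc n + m) F (t(j := s))) has_real_derivative
        partial j (partial (Suc n + m) F) t) (at (t j))"
      using line_deriv[OF sm, of "[Suc n + m]" t j "t j"] by simp
    then show ?thesis
      by (rule DERIV_cong[OF DERIV_mult[OF DERIV_cmult[OF coord_deriv]]])
         (simp add: \<delta>_def algebra_simps)
  qed
  have "((\<lambda>s. partial m F (t(j := s))
          - (\<Sum>n<N. real (Suc n) * (t(j := s)) (Suc n) * partial (Suc n + m) F (t(j := s))))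
     has_real_derivative partial j (partial m F) t
       - (\<Sum>n<N. real (Suc n) * (\<delta> n * partial (Suc n + m) F t
            + t (Suc n) * partial j (partial (Suc n + m) F) t))) (at (t j))"
    using line_deriv[OF sm, of "[m]" t j "t j"] by (intro DERIV_diff DERIV_sum summand) simp
  then have product_rule: "partial j (L m F) t = partial j (partial m F) t
       - (\<Sum>n<N. real (Suc n) * (\<delta> n * partial (Suc n + m) F t
            + t (Suc n) * partial j (partial (Suc n + m) F) t))"
    by (simp add: partial_def L_finite_sum[OF F] DERIV_imp_deriv)
  have "(\<Sum>n<N. real (Suc n) * \<delta> n * partial (Suc n + m) F t)
      = (\<Sum>n<N. if n = j - 1 then real j * partial (j + m) F t else 0)"
    using j by (intro sum.cong) (auto simp: \<delta>_def)
  also have "\<dots> = real j * partial (j + m) F t"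
    using partial_vanishes[OF F, of "j + m" t] by auto
  finally have "(\<Sum>n<N. real (Suc n) * \<delta> n * partial (Suc n + m) F t) = real j * partial (j + m) F t" .
  then show ?thesis
    by (simp add: product_rule distrib_left sum.distrib mult.assoc)
qed

section \<open>The commutator relation\<close>

text \<open>The algebraic core of the commutator computation: with D i = d_i F,
  DD i j = d_i d_j F (symmetric) and c a = (a+1) t_(a+1), the expansion of
  L_n L_m F - L_m L_n F collapses to (m - n) L_(m+n) F.\<close>
lemma commutator_algebra:
  fixes DD :: "nat \<Rightarrow> nat \<Rightarrow> real" and D c :: "nat \<Rightarrow> real"
  assumes sym: "\<And>i j. DD i j = DD j i"
  shows "(DD n m - real n * D (n+m) - (\<Sum>b<M. c b * DD n (Suc b + m)))
     - (\<Sum>a<M. c a * (DD (Suc a + n) m - real (Suc a + n) * D (Suc a + n + m)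
                       - (\<Sum>b<M. c b * DD (Suc a + n) (Suc b + m))))
     - ((DD m n - real m * D (m+n) - (\<Sum>b<M. c b * DD m (Suc b + n)))
     - (\<Sum>a<M. c a * (DD (Suc a + m) n - real (Suc a + m) * D (Suc a + m + n)
                       - (\<Sum>b<M. c b * DD (Suc a + m) (Suc b + n)))))
     = (real m - real n) * (D (m+n) - (\<Sum>a<M. c a * D (Suc a + (m+n))))"
proof -
  have split: "(\<Sum>a<M. c a * (X a - Y a - Z a))
      = (\<Sum>a<M. c a * X a) - (\<Sum>a<M. c a * Y a) - (\<Sum>a<M. c a * Z a)" for X Y Z :: "nat \<Rightarrow> real"
    by (simp add: algebra_simps sum_subtractf sum.distrib)
  text \<open>Mixed terms cancel pairwise, and so do the double sums after swapping indices.\<close>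
  have mixed_nm: "(\<Sum>b<M. c b * DD n (Suc b + m)) = (\<Sum>a<M. c a * DD (Suc a + m) n)"
    and mixed_mn: "(\<Sum>b<M. c b * DD m (Suc b + n)) = (\<Sum>a<M. c a * DD (Suc a + n) m)"
    by (simp_all add: sym)
  have "(\<Sum>a<M. c a * (\<Sum>b<M. c b * DD (Suc a + n) (Suc b + m)))
      = (\<Sum>a<M. \<Sum>b<M. c a * c b * DD (Suc a + n) (Suc b + m))"
    by (simp add: sum_distrib_left mult.assoc)
  also have "\<dots> = (\<Sum>b<M. \<Sum>a<M. c b * c a * DD (Suc b + m) (Suc a + n))"
    by (subst sum.swap) (simp add: sym mult.commute)
  also have "\<dots> = (\<Sum>a<M. c a * (\<Sum>b<M. c b * DD (Suc a + m) (Suc b + n)))"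
    by (simp add: sum_distrib_left mult.assoc)
  finally have double: "(\<Sum>a<M. c a * (\<Sum>b<M. c b * DD (Suc a + n) (Suc b + m)))
      = (\<Sum>a<M. c a * (\<Sum>b<M. c b * DD (Suc a + m) (Suc b + n)))" .
  have first_order: "(\<Sum>a<M. c a * (real (Suc a + n) * D (Suc a + n + m)))
      - (\<Sum>a<M. c a * (real (Suc a + m) * D (Suc a + m + n)))
      = (real n - real m) * (\<Sum>a<M. c a * D (Suc a + (m+n)))"
    by (simp add: sum_distrib_left sum_subtractf[symmetric] algebra_simps)
  show ?thesis
    unfolding split using mixed_nm mixed_mn double first_order sym[of m n]
    by (simp add: algebra_simps)
qed

lemma L_commutator:
  assumes sm: "smooth_fd F" and n: "n \<ge> 1" and m: "m \<ge> 1"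
  shows "L n (L m F) t - L m (L n F) t = (real m - real n) * L (m + n) F t"
proof -
  obtain N where "depends_below N F" using smooth_fd_depends_below[OF sm] .
  then have F: "depends_below (Suc N) F" and Lm: "depends_below (Suc N) (L m F)"
    and Ln: "depends_below (Suc N) (L n F)"
    by (auto intro: depends_below_mono depends_below_L)
  have shifted: "partial (Suc a + i) (L k F) t = partial (Suc a + i) (partial k F) t
      - real (Suc a + i) * partial (Suc a + i + k) F t
      - (\<Sum>b<Suc N. real (Suc b) * t (Suc b) * partial (Suc a + i) (partial (Suc b + k) F) t)"
    for a i k by (rule partial_L[OF sm F]) simp
  show ?thesis
    unfolding L_finite_sum[OF Lm, of n] L_finite_sum[OF Ln, of m] L_finite_sum[OF F, of "m + n"]
      partial_L[OF sm F n] partial_L[OF sm F m] shifted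
    by (rule commutator_algebra[where DD = "\<lambda>i j. partial i (partial j F) t"
          and D = "\<lambda>i. partial i F t" and c = "\<lambda>a. real (Suc a) * t (Suc a)"])
       (rule partial_sym[OF sm])
qed

lemma L_annihilates:
  assumes string_eq: "(\<lambda>n. real (Suc n) * t (Suc n) * U ^ Suc n) sums 1"
    and grad: "\<And>n. n \<ge> 1 \<Longrightarrow> partial n f0 t = U ^ n"
    and k: "k \<ge> 1"
  shows "L k f0 t = 0"
proof -
  have "(\<lambda>n. U ^ k * (real (Suc n) * t (Suc n) * U ^ Suc n)) sums (U ^ k * 1)"
    using string_eq by (rule sums_mult)
  moreover have "(\<lambda>n. U ^ k * (real (Suc n) * t (Suc n) * U ^ Suc n))
      = (\<lambda>n. real (Suc n) * t (Suc n) * partial (Suc n + k) f0 t)"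
    by (simp add: grad power_add algebra_simps)
  ultimately have "(\<Sum>n. real (Suc n) * t (Suc n) * partial (Suc n + k) f0 t) = U ^ k"
    by (simp add: sums_iff)
  then show ?thesis using grad[OF k] by (simp add: L_def)
qed

theorem mainTheorem5:
  shows "(\<forall>F n m t. smooth_fd F \<longrightarrow> n \<ge> 1 \<longrightarrow> m \<ge> 1 \<longrightarrow>
            L n (L m F) t - L m (L n F) t = (real m - real n) * L (m + n) F t)
       \<and> (\<forall>(U :: (nat \<Rightarrow> real) \<Rightarrow> real) (f0 :: (nat \<Rightarrow> real) \<Rightarrow> real) D.
            (\<forall>t\<in>D. (\<lambda>n. real (Suc n) * t (Suc n) * U t ^ Suc n) sums 1) \<longrightarrow>
            (\<forall>t\<in>D. \<forall>n\<ge>1. partial n f0 t = U t ^ n) \<longrightarrow>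
            (\<forall>t\<in>D. \<forall>k\<ge>1. L k f0 t = 0))"
  using L_commutator L_annihilates by blast

end
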